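(* Let $F:\mathcal{G}_{\Sigma,\Delta,\pi}\to\mathcal{G}_{\Sigma,\Delta,\pi}$ be a causal graph dynamics that is monotonic for the subgraph order and admits a monotonic local rule. Assume that for every renaming $R$ the set $\mathrm{Conj}_F(R)$ is a singleton (unique conjugate assumption). Then there is exactly one functor $\widetilde{F}:\mathbf{G}_{\Sigma,\Delta,\pi}\to\mathbf{G}_{\Sigma,\Delta,\pi}$ satisfying $\mathrm{U}\circ F=\widetilde{F}\circ\mathrm{U}$.
   Context: Fix an uncountably infinite set $\mathcal{V}$, sets $\Sigma,\Delta$, finite $\pi$. Graphs: countable $V(G)\subset\mathcal{V}$, a set $E(G)$ of pairwise disjoint two-element subsets of $V(G)\times\pi$, partial labelings $\sigma(G),\delta(G)$; $\mathcal{G}_{\Sigma,\Delta,\pi}$ the set of graphs, ordered by componentwise inclusion $\subseteq$. Renamings are bijections of $\mathcal{V}$, acting naturally on graphs ($V(R(G))=R(V(G))$, edges $\{u\!:\!i,v\!:\!j\}\mapsto\{R(u)\!:\!i,R(v)\!:\!j\}$, labelings precomposed with $R^{-1}$). $\mathrm{Conj}_F(R)$ is the set of renamings $R'$ with $F\circ R=R'\circ F$. Disks $G^r_c$: vertices at distance $\le r+1$ from $c$, edges with an endpoint at distance $\le r$, vertex labels only at distance $\le r$. A local rule of radius $r$ maps radius-$r$ disks to graphs with renaming covariance, disjointness preservation, bounded output size and pairwise consistency of outputs on a common graph; a CGD is $F(G)=\bigcup_{v\in V(G)} f(G^r_v)$; monotonic means w.r.t. $\subseteq$. Category $\mathbf{G}_{\Sigma,\Delta,\pi}$: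 objects graphs, morphisms $m:G\to H$ given by renamings $|m|$ with $|m|(G)\subseteq H$, composition by composition of renamings, identities with identity renaming. $\mathrm{U}:(\mathcal{G}_{\Sigma,\Delta,\pi},\subseteq)\to\mathbf{G}_{\Sigma,\Delta,\pi}$ is the identity on objects and sends $G\subseteq H$ to the morphism $G\to H$ with identity renaming. *)

theory Defs
  imports Main "HOL-Library.Countable_Set"
begin

text \<open>Vertex names have type 'v (the set V), ports type 'p (the finite set pi),
vertex labels 's (Sigma), edge labels 'd (Delta). A port is a pair (u, i).\<close>

record ('v, 'p, 's, 'd) graph =
  gV :: "'v set"
  gE :: "('v \<times> 'p) set set"
  gsig :: "'v \<Rightarrow> 's option"
  gdel :: "('v \<times> 'p) set \<Rightarrow> 'd option"

definition is_graph :: "('v, 'p, 's, 'd) graph \<Rightarrow> bool" where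
  "is_graph G \<longleftrightarrow>
     countable (gV G) \<and>
     (\<forall>e \<in> gE G. \<exists>a b. a \<noteq> b \<and> e = {a, b} \<and> fst a \<in> gV G \<and> fst b \<in> gV G) \<and>
     (\<forall>e \<in> gE G. \<forall>e' \<in> gE G. e \<noteq> e' \<longrightarrow> e \<inter> e' = {}) \<and>
     dom (gsig G) \<subseteq> gV G \<and> dom (gdel G) \<subseteq> gE G"

definition gsub :: "('v, 'p, 's, 'd) graph \<Rightarrow> ('v, 'p, 's, 'd) graph \<Rightarrow> bool" where
  "gsub G H \<longleftrightarrow> gV G \<subseteq> gV H \<and> gE G \<subseteq> gE H \<and>
                  gsig G \<subseteq>\<^sub>m gsig H \<and> gdel G \<subseteq>\<^sub>m gdel H"

definition rename :: "('v \<Rightarrow> 'v) \<Rightarrow> ('v, 'p, 's, 'd) graph \<Rightarrow> ('v, 'p, 's, 'd) graph" where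
  "rename R G = \<lparr> gV = R ` gV G,
                  gE = (\<lambda>e. (\<lambda>(u, i). (R u, i)) ` e) ` gE G,
                  gsig = gsig G \<circ> inv R,
                  gdel = gdel G \<circ> (\<lambda>e. (\<lambda>(u, i). (inv R u, i)) ` e) \<rparr>"

definition Conj :: "(('v, 'p, 's, 'd) graph \<Rightarrow> ('v, 'p, 's, 'd) graph) \<Rightarrow> ('v \<Rightarrow> 'v)
                    \<Rightarrow> ('v \<Rightarrow> 'v) set" where
  "Conj F R = {R'. bij R' \<and> (\<forall>G. is_graph G \<longrightarrow> F (rename R G) = rename R' (F G))}"

definition adj :: "('v, 'p, 's, 'd) graph \<Rightarrow> 'v \<Rightarrow> 'v \<Rightarrow> bool" where
  "adj G u v \<longleftrightarrow> (\<exists>i j. {(u, i), (v, j)} \<in> gE G)"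

fun within :: "('v, 'p, 's, 'd) graph \<Rightarrow> 'v \<Rightarrow> nat \<Rightarrow> 'v \<Rightarrow> bool" where
  "within G c 0 u \<longleftrightarrow> c \<in> gV G \<and> u = c"
| "within G c (Suc n) u \<longleftrightarrow> within G c n u \<or> (\<exists>w. within G c n w \<and> adj G w u)"

definition disk :: "('v, 'p, 's, 'd) graph \<Rightarrow> nat \<Rightarrow> 'v \<Rightarrow> ('v, 'p, 's, 'd) graph" where
  "disk G r c =
     (let E' = {e \<in> gE G. \<exists>p \<in> e. within G c r (fst p)} in
      \<lparr> gV = {u. within G c (Suc r) u},
        gE = E',
        gsig = gsig G |` {u. within G c r u},
        gdel = gdel G |` E' \<rparr>)"

definition is_disk :: "nat \<Rightarrow> ('v, 'p, 's, 'd) graph \<Rightarrow> bool" where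
  "is_disk r D \<longleftrightarrow> (\<exists>G c. is_graph G \<and> c \<in> gV G \<and> D = disk G r c)"

definition consistent :: "('v, 'p, 's, 'd) graph \<Rightarrow> ('v, 'p, 's, 'd) graph \<Rightarrow> bool" where
  "consistent G H \<longleftrightarrow>
     (\<forall>e \<in> gE G. \<forall>e' \<in> gE H. e = e' \<or> e \<inter> e' = {}) \<and>
     (\<forall>u \<in> dom (gsig G) \<inter> dom (gsig H). gsig G u = gsig H u) \<and>
     (\<forall>e \<in> dom (gdel G) \<inter> dom (gdel H). gdel G e = gdel H e)"

definition gUnion :: "('v, 'p, 's, 'd) graph set \<Rightarrow> ('v, 'p, 's, 'd) graph" where
  "gUnion S = \<lparr> gV = \<Union> (gV ` S), gE = \<Union> (gE ` S),
     gsig = (\<lambda>u. if \<exists>G \<in> S. gsig G u \<noteq> None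
                 then gsig (SOME G. G \<in> S \<and> gsig G u \<noteq> None) u else None),
     gdel = (\<lambda>e. if \<exists>G \<in> S. gdel G e \<noteq> None
                 then gdel (SOME G. G \<in> S \<and> gdel G e \<noteq> None) e else None) \<rparr>"

definition local_rule :: "nat \<Rightarrow> (('v, 'p, 's, 'd) graph \<Rightarrow> ('v, 'p, 's, 'd) graph) \<Rightarrow> bool" where
  "local_rule r f \<longleftrightarrow>
     (\<forall>D. is_disk r D \<longrightarrow> is_graph (f D)) \<and>
     \<comment> \<open>renaming covariance\<close>
     (\<forall>D R. is_disk r D \<and> bij R \<longrightarrow> (\<exists>R'. bij R' \<and> f (rename R D) = rename R' (f D))) \<and>
     \<comment> \<open>disjointness preservation\<close>
     (\<forall>D D'. is_disk r D \<and> is_disk r D' \<and> gV D \<inter> gV D' = {} \<longrightarrow> gV (f D) \<inter> gV (f D') = {}) \<and>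
     \<comment> \<open>bounded output size\<close>
     (\<exists>b::nat. \<forall>D. is_disk r D \<longrightarrow> finite (gV (f D)) \<and> card (gV (f D)) \<le> b) \<and>
     \<comment> \<open>pairwise consistency of outputs on a common graph\<close>
     (\<forall>G u v. is_graph G \<and> u \<in> gV G \<and> v \<in> gV G \<longrightarrow> consistent (f (disk G r u)) (f (disk G r v)))"

definition monotonic_local_rule :: "nat \<Rightarrow> (('v, 'p, 's, 'd) graph \<Rightarrow> ('v, 'p, 's, 'd) graph) \<Rightarrow> bool" where
  "monotonic_local_rule r f \<longleftrightarrow> local_rule r f \<and>
     (\<forall>D D'. is_disk r D \<and> is_disk r D' \<and> gsub D D' \<longrightarrow> gsub (f D) (f D'))"

definition induced_by :: "(('v, 'p, 's, 'd) graph \<Rightarrow> ('v, 'p, 's, 'd) graph) \<Rightarrow> nat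
                         \<Rightarrow> (('v, 'p, 's, 'd) graph \<Rightarrow> ('v, 'p, 's, 'd) graph) \<Rightarrow> bool" where
  "induced_by F r f \<longleftrightarrow> (\<forall>G. is_graph G \<longrightarrow> F G = gUnion ((\<lambda>v. f (disk G r v)) ` gV G))"

definition is_CGD :: "(('v, 'p, 's, 'd) graph \<Rightarrow> ('v, 'p, 's, 'd) graph) \<Rightarrow> bool" where
  "is_CGD F \<longleftrightarrow> (\<exists>r f. local_rule r f \<and> induced_by F r f)"

definition monotonic_F :: "(('v, 'p, 's, 'd) graph \<Rightarrow> ('v, 'p, 's, 'd) graph) \<Rightarrow> bool" where
  "monotonic_F F \<longleftrightarrow> (\<forall>G H. is_graph G \<and> is_graph H \<and> gsub G H \<longrightarrow> gsub (F G) (F H))"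

type_synonym ('v, 'p, 's, 'd) morph =
  "('v, 'p, 's, 'd) graph \<times> ('v, 'p, 's, 'd) graph \<times> ('v \<Rightarrow> 'v)"

definition msrc :: "('v, 'p, 's, 'd) morph \<Rightarrow> ('v, 'p, 's, 'd) graph" where
  "msrc m = fst m"
definition mtgt :: "('v, 'p, 's, 'd) morph \<Rightarrow> ('v, 'p, 's, 'd) graph" where
  "mtgt m = fst (snd m)"
definition mren :: "('v, 'p, 's, 'd) morph \<Rightarrow> ('v \<Rightarrow> 'v)" where
  "mren m = snd (snd m)"

definition is_morph :: "('v, 'p, 's, 'd) morph \<Rightarrow> bool" where
  "is_morph m \<longleftrightarrow> is_graph (msrc m) \<and> is_graph (mtgt m) \<and> bij (mren m) \<and>
                   gsub (rename (mren m) (msrc m)) (mtgt m)"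

definition mid :: "('v, 'p, 's, 'd) graph \<Rightarrow> ('v, 'p, 's, 'd) morph" where
  "mid G = (G, G, id)"

text \<open>mcomp m2 m1 = m2 o m1 (first m1, then m2).\<close>
definition mcomp :: "('v, 'p, 's, 'd) morph \<Rightarrow> ('v, 'p, 's, 'd) morph \<Rightarrow> ('v, 'p, 's, 'd) morph" where
  "mcomp m2 m1 = (msrc m1, mtgt m2, mren m2 \<circ> mren m1)"

text \<open>A functor G -> G, given by an object map and a morphism map
  (only their values on objects / morphisms of G matter).\<close>
definition is_functor ::
  "(('v, 'p, 's, 'd) graph \<Rightarrow> ('v, 'p, 's, 'd) graph) \<Rightarrow>
   (('v, 'p, 's, 'd) morph \<Rightarrow> ('v, 'p, 's, 'd) morph) \<Rightarrow> bool" where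
  "is_functor Fo Fm \<longleftrightarrow>
     (\<forall>G. is_graph G \<longrightarrow> is_graph (Fo G) \<and> Fm (mid G) = mid (Fo G)) \<and>
     (\<forall>m. is_morph m \<longrightarrow> is_morph (Fm m) \<and> msrc (Fm m) = Fo (msrc m) \<and> mtgt (Fm m) = Fo (mtgt m)) \<and>
     (\<forall>m1 m2. is_morph m1 \<and> is_morph m2 \<and> mtgt m1 = msrc m2 \<longrightarrow>
               Fm (mcomp m2 m1) = mcomp (Fm m2) (Fm m1))"

text \<open>U: (graphs, subgraph order) -> G, identity on objects, G <= H to the morphism with identity renaming.\<close>
definition Umor :: "('v, 'p, 's, 'd) graph \<Rightarrow> ('v, 'p, 's, 'd) graph \<Rightarrow> ('v, 'p, 's, 'd) morph" where
  "Umor G H = (G, H, id)"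

text \<open>U o F = Ftilde o U, F viewed as a functor of the poset (monotonic).\<close>
definition lifts :: "(('v, 'p, 's, 'd) graph \<Rightarrow> ('v, 'p, 's, 'd) graph) \<Rightarrow>
   (('v, 'p, 's, 'd) graph \<Rightarrow> ('v, 'p, 's, 'd) graph) \<Rightarrow>
   (('v, 'p, 's, 'd) morph \<Rightarrow> ('v, 'p, 's, 'd) morph) \<Rightarrow> bool" where
  "lifts F Fo Fm \<longleftrightarrow>
     (\<forall>G. is_graph G \<longrightarrow> Fo G = F G) \<and>
     (\<forall>G H. is_graph G \<and> is_graph H \<and> gsub G H \<longrightarrow> Fm (Umor G H) = Umor (F G) (F H))"

end

theory Submission
  imports Defs
begin

(* Existence: R' := the unique conjugate of R preserves identities and composition
   (by uniqueness), and F sends a morphism R : G -> H, i.e. R G <= H, to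
   R' : F G -> F H, since R' (F G) = F (R G) <= F H by monotonicity.
   Uniqueness: a functor lifting F is F on objects and fixes inclusions.  Factoring
   (G, H, R) through the empty graph shows that the renaming it assigns depends on R
   only; applying it to R : G -> R G and to the inverse R G -> G gives mutually
   inverse renamings S, T with S (F G) <= F (R G) and T (F (R G)) <= F G, hence
   F (R G) = S (F G), so S is a conjugate of R and equals R'. *)

lemma rename_apfst:
  fixes G :: "('v, 'p, 's, 'd) graph"
  shows "rename R G = \<lparr> gV = R ` gV G, gE = (`) (apfst R) ` gE G,
                  gsig = gsig G \<circ> inv R, gdel = gdel G \<circ> (`) (apfst (inv R)) \<rparr>"
proof -
  have "(\<lambda>(u, i::'p). (f u, i)) = apfst f" for f :: "'v \<Rightarrow> 'v"
    by (simp add: fun_eq_iff)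
  then show ?thesis by (simp only: rename_def)
qed

lemma rename_id: "rename id G = G"
  by (simp add: rename_apfst image_comp)

lemma rename_comp:
  assumes "bij R1" "bij R2"
  shows "rename (R2 \<circ> R1) G = rename R2 (rename R1 G)"
proof -
  have "inv (R2 \<circ> R1) = inv R1 \<circ> inv R2"
    using assms by (simp add: o_inv_distrib)
  then show ?thesis
    by (simp add: rename_apfst image_comp o_assoc comp_def apfst_compose)
qed

lemma rename_inv_rename:
  assumes "bij R" shows "rename (inv R) (rename R G) = G"
  using assms by (simp add: rename_comp[symmetric] bij_imp_bij_inv bij_is_inj rename_id)

lemma gsub_refl: "gsub G G"
  by (simp add: gsub_def)

lemma gsub_antisym: "gsub G H \<Longrightarrow> gsub H G \<Longrightarrow> G = H"
  unfolding gsub_def by (intro graph.equality) (auto intro: map_le_antisym)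

lemma gsub_rename: "gsub G H \<Longrightarrow> gsub (rename R G) (rename R H)"
  unfolding gsub_def rename_def map_le_def by (auto simp: dom_def)

lemma is_graph_rename:
  assumes R: "bij R" and G: "is_graph G"
  shows "is_graph (rename R G)"
proof -
  have inj: "inj (apfst R)" using R by (simp add: bij_is_inj)
  have edge: "\<exists>a b. a \<noteq> b \<and> apfst R ` e = {a, b} \<and> fst a \<in> R ` gV G \<and> fst b \<in> R ` gV G"
    if e: "e \<in> gE G" for e
  proof -
    have "\<forall>e \<in> gE G. \<exists>a b. a \<noteq> b \<and> e = {a, b} \<and> fst a \<in> gV G \<and> fst b \<in> gV G"
      using G by (simp add: is_graph_def)
    then obtain a b where "a \<noteq> b" "e = {a, b}" "fst a \<in> gV G" "fst b \<in> gV G"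
      using e by blast
    moreover have "apfst R a \<noteq> apfst R b"
      using inj \<open>a \<noteq> b\<close> by (simp add: inj_eq)
    ultimately show ?thesis
      by (intro exI[of _ "apfst R a"] exI[of _ "apfst R b"]) simp
  qed
  have disjoint: "apfst R ` e \<inter> apfst R ` e' = {}"
    if "e \<in> gE G" "e' \<in> gE G" "apfst R ` e \<noteq> apfst R ` e'" for e e'
  proof -
    have "\<forall>e \<in> gE G. \<forall>e' \<in> gE G. e \<noteq> e' \<longrightarrow> e \<inter> e' = {}"
      using G by (simp add: is_graph_def)
    with that show ?thesis by (metis image_Int[OF inj] image_empty)
  qed
  have sig: "dom (gsig G \<circ> inv R) \<subseteq> R ` gV G"
  proof
    fix u assume "u \<in> dom (gsig G \<circ> inv R)"
    then have "inv R u \<in> gV G" using G by (auto simp: is_graph_def)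
    then show "u \<in> R ` gV G" using R by (metis bij_inv_eq_iff image_eqI)
  qed
  have del: "dom (gdel G \<circ> (`) (apfst (inv R))) \<subseteq> (`) (apfst R) ` gE G"
  proof
    fix e assume "e \<in> dom (gdel G \<circ> (`) (apfst (inv R)))"
    then have "apfst (inv R) ` e \<in> gE G" using G by (auto simp: is_graph_def)
    moreover have "apfst R ` apfst (inv R) ` e = e"
      using R by (force simp: image_iff bij_is_surj surj_f_inv_f)
    ultimately show "e \<in> (`) (apfst R) ` gE G" by (metis image_eqI)
  qed
  have "countable (R ` gV G)" using G by (simp add: is_graph_def)
  then show ?thesis
    using edge disjoint sig del unfolding is_graph_def rename_apfst by simp
qed

definition empty_graph :: "('v, 'p, 's, 'd) graph" where
  "empty_graph = \<lparr>gV = {}, gE = {}, gsig = Map.empty, gdel = Map.empty\<rparr>"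

lemma is_graph_empty_graph: "is_graph empty_graph"
  by (simp add: empty_graph_def is_graph_def)

lemma rename_empty_graph: "rename R empty_graph = empty_graph"
  by (simp add: empty_graph_def rename_def comp_def)

lemma gsub_empty_graph: "gsub empty_graph G"
  by (simp add: empty_graph_def gsub_def)

lemma id_in_Conj: "id \<in> Conj F id"
  by (simp add: Conj_def rename_id)

lemma comp_in_Conj:
  fixes F :: "('v, 'p, 's, 'd) graph \<Rightarrow> ('v, 'p, 's, 'd) graph"
  assumes R1: "bij R1" "R1' \<in> Conj F R1" and R2: "bij R2" "R2' \<in> Conj F R2"
  shows "R2' \<circ> R1' \<in> Conj F (R2 \<circ> R1)"
  unfolding Conj_def
proof (intro CollectI conjI allI impI)
  have R1': "bij R1'" and R2': "bij R2'" using R1 R2 by (simp_all add: Conj_def)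
  then show "bij (R2' \<circ> R1')" by (simp add: bij_comp)
  fix G :: "('v, 'p, 's, 'd) graph" assume G: "is_graph G"
  have "F (rename (R2 \<circ> R1) G) = F (rename R2 (rename R1 G))"
    using R1 R2 by (simp add: rename_comp)
  also have "\<dots> = rename R2' (F (rename R1 G))"
    using R1(1) R2(2) G by (simp add: Conj_def is_graph_rename)
  also have "\<dots> = rename R2' (rename R1' (F G))"
    using R1(2) G by (simp add: Conj_def)
  also have "\<dots> = rename (R2' \<circ> R1') (F G)"
    using R1' R2' by (simp add: rename_comp)
  finally show "F (rename (R2 \<circ> R1) G) = rename (R2' \<circ> R1') (F G)" .
qed

definition conj_ren ::
  "(('v, 'p, 's, 'd) graph \<Rightarrow> ('v, 'p, 's, 'd) graph) \<Rightarrow> ('v \<Rightarrow> 'v) \<Rightarrow> ('v \<Rightarrow> 'v)" where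
  "conj_ren F R = (THE R'. R' \<in> Conj F R)"

definition lift_morph ::
  "(('v, 'p, 's, 'd) graph \<Rightarrow> ('v, 'p, 's, 'd) graph) \<Rightarrow>
   ('v, 'p, 's, 'd) morph \<Rightarrow> ('v, 'p, 's, 'd) morph" where
  "lift_morph F m = (F (msrc m), F (mtgt m), conj_ren F (mren m))"

locale unique_conjugates =
  fixes F :: "('v, 'p, 's, 'd) graph \<Rightarrow> ('v, 'p, 's, 'd) graph"
  assumes Conj_singleton: "bij R \<Longrightarrow> \<exists>R'. Conj F R = {R'}"
begin

lemma Conj_eq_conj_ren:
  assumes "bij R" shows "Conj F R = {conj_ren F R}"
proof -
  obtain R' where "Conj F R = {R'}" using Conj_singleton assms by blast
  then show ?thesis by (simp add: conj_ren_def)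
qed

lemma conj_ren_eqI: "bij R \<Longrightarrow> R' \<in> Conj F R \<Longrightarrow> conj_ren F R = R'"
  by (simp add: Conj_eq_conj_ren)

lemma conj_ren_in_Conj: "bij R \<Longrightarrow> conj_ren F R \<in> Conj F R"
  by (simp add: Conj_eq_conj_ren)

lemma bij_conj_ren: "bij R \<Longrightarrow> bij (conj_ren F R)"
  using conj_ren_in_Conj by (simp add: Conj_def)

lemma F_rename: "bij R \<Longrightarrow> is_graph G \<Longrightarrow> F (rename R G) = rename (conj_ren F R) (F G)"
  using conj_ren_in_Conj by (simp add: Conj_def)

lemma conj_ren_id: "conj_ren F id = id"
  by (simp add: conj_ren_eqI id_in_Conj)

lemma conj_ren_comp:
  "bij R1 \<Longrightarrow> bij R2 \<Longrightarrow> conj_ren F (R2 \<circ> R1) = conj_ren F R2 \<circ> conj_ren F R1"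
  by (intro conj_ren_eqI comp_in_Conj bij_comp conj_ren_in_Conj)

lemma is_functor_lift_morph:
  assumes graph: "\<And>G. is_graph G \<Longrightarrow> is_graph (F G)" and mono: "monotonic_F F"
  shows "is_functor F (lift_morph F)"
  unfolding is_functor_def
proof (intro conjI allI impI)
  fix G :: "('v, 'p, 's, 'd) graph" assume "is_graph G"
  then show "is_graph (F G)" by (rule graph)
  show "lift_morph F (mid G) = mid (F G)"
    by (simp add: lift_morph_def mid_def msrc_def mtgt_def mren_def conj_ren_id)
next
  fix m :: "('v, 'p, 's, 'd) morph" assume "is_morph m"
  then have R: "bij (mren m)" and G: "is_graph (msrc m)" and H: "is_graph (mtgt m)"
    and sub: "gsub (rename (mren m) (msrc m)) (mtgt m)"
    by (simp_all add: is_morph_def)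
  have "gsub (F (rename (mren m) (msrc m))) (F (mtgt m))"
    using mono sub G H R is_graph_rename unfolding monotonic_F_def by blast
  then show "is_morph (lift_morph F m)"
    using R G H graph bij_conj_ren F_rename
    by (simp add: is_morph_def lift_morph_def msrc_def mtgt_def mren_def)
  show "msrc (lift_morph F m) = F (msrc m)" "mtgt (lift_morph F m) = F (mtgt m)"
    by (simp_all add: lift_morph_def msrc_def mtgt_def)
next
  fix m1 m2 :: "('v, 'p, 's, 'd) morph"
  assume "is_morph m1 \<and> is_morph m2 \<and> mtgt m1 = msrc m2"
  then show "lift_morph F (mcomp m2 m1) = mcomp (lift_morph F m2) (lift_morph F m1)"
    by (simp add: is_morph_def lift_morph_def mcomp_def msrc_def mtgt_def mren_def conj_ren_comp)
qed

lemma lifts_lift_morph: "lifts F F (lift_morph F)"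
  by (simp add: lifts_def lift_morph_def Umor_def msrc_def mtgt_def mren_def conj_ren_id)

end

lemma rename_eq_if_gsub_inverse:
  assumes "bij S" "bij T" "S \<circ> T = id"
    and "gsub (rename S A) B" "gsub (rename T B) A"
  shows "B = rename S A"
proof -
  have "gsub (rename S (rename T B)) (rename S A)"
    using assms(5) by (rule gsub_rename)
  then have "gsub B (rename S A)"
    using assms(1-3) by (simp add: rename_comp[symmetric] rename_id)
  with assms(4) show ?thesis by (simp add: gsub_antisym)
qed

lemma functor_mren_comp_eq_id:
  assumes "is_functor Fo Fm" "is_morph m1" "is_morph m2" "mtgt m1 = msrc m2"
    and "mcomp m2 m1 = mid (msrc m1)"
  shows "mren (Fm m2) \<circ> mren (Fm m1) = id"
proof -
  have "mcomp (Fm m2) (Fm m1) = Fm (mid (msrc m1))"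
    using assms unfolding is_functor_def by metis
  also have "\<dots> = mid (Fo (msrc m1))"
    using assms(1,2) unfolding is_functor_def is_morph_def by blast
  finally show ?thesis by (simp add: mcomp_def mid_def mren_def)
qed

lemma lifting_functor_morph_eq:
  assumes Fun: "is_functor Fo Fm" and lift: "lifts F Fo Fm" and m: "is_morph (G, H, R)"
  shows "Fm (G, H, R) = (F G, F H, mren (Fm (empty_graph, empty_graph, R)))"
proof -
  have G: "is_graph G" and H: "is_graph H" and R: "bij R"
    using m by (simp_all add: is_morph_def msrc_def mtgt_def mren_def)
  have Umor_morph: "is_morph (Umor empty_graph K)" if "is_graph K" for K
    using that by (simp add: is_morph_def Umor_def msrc_def mtgt_def mren_def rename_id
        is_graph_empty_graph gsub_empty_graph)
  have empty_morph: "is_morph (empty_graph, empty_graph, R)"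
    using R by (simp add: is_morph_def msrc_def mtgt_def mren_def rename_empty_graph
        is_graph_empty_graph gsub_refl)
  have Fm_Umor: "Fm (Umor empty_graph K) = Umor (F empty_graph) (F K)" if "is_graph K" for K
    using lift that by (simp add: lifts_def is_graph_empty_graph gsub_empty_graph)
  have comp: "Fm (mcomp m2 m1) = mcomp (Fm m2) (Fm m1)"
    if "is_morph m1" "is_morph m2" "mtgt m1 = msrc m2" for m1 m2
    using Fun that unfolding is_functor_def by blast
  \<comment> \<open>both composites are the morphism (empty_graph, H, R)\<close>
  have "mcomp (Fm (G, H, R)) (Fm (Umor empty_graph G))
        = mcomp (Fm (Umor empty_graph H)) (Fm (empty_graph, empty_graph, R))"
    using comp[OF Umor_morph[OF G] m] comp[OF empty_morph Umor_morph[OF H]]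
    by (simp add: mcomp_def Umor_def msrc_def mtgt_def mren_def)
  then have "mren (Fm (G, H, R)) = mren (Fm (empty_graph, empty_graph, R))"
    using Fm_Umor[OF G] Fm_Umor[OF H] by (simp add: mcomp_def Umor_def mren_def)
  moreover have "msrc (Fm (G, H, R)) = F G" "mtgt (Fm (G, H, R)) = F H"
    using Fun lift m G H unfolding is_functor_def lifts_def by (simp_all add: msrc_def mtgt_def)
  ultimately show ?thesis by (simp add: msrc_def mtgt_def mren_def prod_eq_iff)
qed

lemma lifting_functor_mren_in_Conj:
  assumes Fun: "is_functor Fo Fm" and lift: "lifts F Fo Fm" and R: "bij R"
  shows "mren (Fm (empty_graph, empty_graph, R)) \<in> Conj F R"
proof -
  define S where "S R' = mren (Fm (empty_graph, empty_graph, R'))" for R'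
  have Ri: "bij (inv R)" using R by (rule bij_imp_bij_inv)
  have "bij (S R) \<and> F (rename R G) = rename (S R) (F G)" if G: "is_graph G" for G
  proof -
    have RG: "is_graph (rename R G)" using R G by (rule is_graph_rename)
    have m1: "is_morph (G, rename R G, R)"
      using G RG R by (simp add: is_morph_def msrc_def mtgt_def mren_def gsub_refl)
    have m2: "is_morph (rename R G, G, inv R)"
      using G RG R Ri by (simp add: is_morph_def msrc_def mtgt_def mren_def gsub_refl rename_inv_rename)
    have Fm1: "Fm (G, rename R G, R) = (F G, F (rename R G), S R)"
      and Fm2: "Fm (rename R G, G, inv R) = (F (rename R G), F G, S (inv R))"
      using lifting_functor_morph_eq[OF Fun lift] m1 m2 by (simp_all add: S_def)
    have "is_morph (Fm (G, rename R G, R))" "is_morph (Fm (rename R G, G, inv R))"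
      using Fun m1 m2 unfolding is_functor_def by blast+
    then have "bij (S R)" "bij (S (inv R))"
      and "gsub (rename (S R) (F G)) (F (rename R G))"
      and "gsub (rename (S (inv R)) (F (rename R G))) (F G)"
      unfolding Fm1 Fm2 by (simp_all add: is_morph_def msrc_def mtgt_def mren_def)
    moreover have "S R \<circ> S (inv R) = id"
      using functor_mren_comp_eq_id[OF Fun m2 m1] surj_iff[THEN iffD1, OF bij_is_surj[OF R]] Fm1 Fm2
      by (simp add: mcomp_def mid_def msrc_def mtgt_def mren_def)
    ultimately show ?thesis by (simp add: rename_eq_if_gsub_inverse)
  qed
  then show ?thesis using is_graph_empty_graph by (auto simp: Conj_def S_def)
qed

lemma (in unique_conjugates) lifting_functor_eq_lift_morph:
  assumes "is_functor Fo Fm" "lifts F Fo Fm" "is_morph m"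
  shows "Fm m = lift_morph F m"
proof -
  obtain G H R where m: "m = (G, H, R)" by (cases m)
  with assms(3) have "bij R" by (simp add: is_morph_def mren_def)
  then have "conj_ren F R = mren (Fm (empty_graph, empty_graph, R))"
    using assms(1,2) by (intro conj_ren_eqI lifting_functor_mren_in_Conj)
  then show ?thesis
    using lifting_functor_morph_eq[OF assms(1,2)] assms(3)
    by (simp add: m lift_morph_def msrc_def mtgt_def mren_def)
qed

theorem proposition4p12:
  fixes F :: "('v, 'p::finite, 's, 'd) graph \<Rightarrow> ('v, 'p, 's, 'd) graph"
  assumes "infinite (UNIV :: 'v set)" and "\<not> countable (UNIV :: 'v set)"
    and "\<forall>G. is_graph G \<longrightarrow> is_graph (F G)"
    and "is_CGD F"
    and "monotonic_F F"
    and "\<exists>r f. monotonic_local_rule r f \<and> induced_by F r f"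
    and "\<forall>R. bij R \<longrightarrow> (\<exists>R'. Conj F R = {R'})"
  shows "\<exists>Fo Fm. is_functor Fo Fm \<and> lifts F Fo Fm \<and>
           (\<forall>Fo' Fm'. is_functor Fo' Fm' \<and> lifts F Fo' Fm' \<longrightarrow>
              (\<forall>G. is_graph G \<longrightarrow> Fo' G = Fo G) \<and>
              (\<forall>m. is_morph m \<longrightarrow> Fm' m = Fm m))"
proof -
  interpret unique_conjugates F
    using assms(7) by unfold_locales blast
  have "is_functor F (lift_morph F)"
    using assms(3,5) by (intro is_functor_lift_morph) blast+
  moreover have "(\<forall>G. is_graph G \<longrightarrow> Fo' G = F G) \<and>
                 (\<forall>m. is_morph m \<longrightarrow> Fm' m = lift_morph F m)"
    if "is_functor Fo' Fm'" "lifts F Fo' Fm'" for Fo' Fm'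
    using that lifting_functor_eq_lift_morph by (simp add: lifts_def)
  ultimately show ?thesis
    using lifts_lift_morph by blast
qed

end
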